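(* Let $m,\ell\in\mathbb{N}_0$ and $d\in\mathbb{N}$ with $d\ge m+\ell$. Then there are real coefficients $a_0,\dots,a_{\lfloor m/2\rfloor}$ such that for all $x\in\mathbb{R}^d$ and $y\in\mathbb{S}^{d-1}$, $$\langle x,y\rangle^m\|x\|^{2\ell}=\sum_{i=0}^{\lfloor m/2\rfloor}a_i\,\mu^{(m-2i,\ell+i)}_{1,d}(E_{x,y},xx^* ).$$
   Context: $\mathscr{H}_d$ denotes the real symmetric $d\times d$ matrices with $\langle A,B\rangle=\operatorname{trace}(AB)$. $\mathcal{G}_{1,d}$ is the set of rank-one orthogonal projections in $\mathscr{H}_d$, with orthogonally invariant Borel probability measure $\sigma_{1,d}$. For $A,B\in\mathscr{H}_d$ and $p,q\in\mathbb{N}_0$, $\mu^{(p,q)}_{1,d}(A,B):=\int_{\mathcal{G}_{1,d}}\langle P,A\rangle^p\langle P,B\rangle^q\,d\sigma_{1,d}(P)$. For $x,y\in\mathbb{R}^d$, $E_{x,y}:=\tfrac12(xy^*+yx^* )$. *)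

theory Defs
  imports "HOL-Probability.Probability"
begin

text \<open>Real symmetric d x d matrices (d = CARD('n)) with the trace inner product.\<close>
definition hs_inner :: "real^'n^'n \<Rightarrow> real^'n^'n \<Rightarrow> real" where
  "hs_inner A B = trace (A ** B)"

definition G1 :: "(real^'n^'n) set" where
  "G1 = {P. transpose P = P \<and> P ** P = P \<and> rank P = 1}"

text \<open>Orthogonally invariant Borel probability measures on G1 (viewed as measures on
  the ambient space of matrices, concentrated on G1).\<close>
definition orth_inv_prob_on_G1 :: "(real^'n^'n) measure \<Rightarrow> bool" where
  "orth_inv_prob_on_G1 \<sigma> \<longleftrightarrow>
     sets \<sigma> = sets borel \<and> prob_space \<sigma> \<and> emeasure \<sigma> G1 = 1 \<and>
     (\<forall>Q::real^'n^'n. orthogonal_matrix Q \<longrightarrow>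
        distr \<sigma> \<sigma> (\<lambda>P. Q ** P ** transpose Q) = \<sigma>)"

definition mu1 :: "(real^'n^'n) measure \<Rightarrow> nat \<Rightarrow> nat \<Rightarrow> real^'n^'n \<Rightarrow> real^'n^'n \<Rightarrow> real" where
  "mu1 \<sigma> p q A B = (\<integral>P. (hs_inner P A) ^ p * (hs_inner P B) ^ q \<partial>\<sigma>)"

definition outer :: "real^'n \<Rightarrow> real^'n \<Rightarrow> real^'n^'n" where
  "outer x y = (\<chi> i j. x $ i * y $ j)"

definition Exy :: "real^'n \<Rightarrow> real^'n \<Rightarrow> real^'n^'n" where
  "Exy x y = (1/2) *\<^sub>R (outer x y + outer y x)"

end

(*
  Write a rank-one projection as P = u u^T with u a unit vector, so that the moment
  mu^(p,q)(E_{x,y}, x x^T) is the expectation of (u.x)^(p+2q) (u.y)^p.  Choose an orthonormal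
  pair e, f with x = |x| e and y = (e.y) e + (f.y) f, and put zeta = u.e + i u.f and
  omega = (e.y) + i (f.y) = cis theta, a point of the unit circle.  After the binomial expansion of
  (Re zeta)^N (Re (zeta conj omega))^k, invariance of sigma under the rotations of the
  (e,f)-plane kills every moment of zeta^p conj(zeta)^q with p <> q.  Hence for k = m - 2i the
  moment is |x|^(m+2l) times a trigonometric polynomial sum_b gamma_(i,b) cos((k - 2b) theta)
  whose coefficients are positive, because the even moments of u.e are.  These polynomials are
  triangular with respect to the degrees m, m - 2, ..., so (Re omega)^m = cos^m theta is a fixed
  linear combination of them, and its coefficients are the a_i.
*)

theory Submission
  imports Defs
begin

definition Eform :: "real^'n^'n \<Rightarrow> real^'n \<Rightarrow> real^'n \<Rightarrow> real" where
  "Eform P a b = hs_inner P (Exy a b)"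

lemma inner_matrix_vector_mult: "a \<bullet> (A *v b) = (transpose A *v a) \<bullet> (b :: real^'n)"
  using dot_lmul_matrix[of a A b] vector_transpose_matrix[of a "transpose A"] by simp

lemma Eform_eq: "Eform P a b = (a \<bullet> (P *v b) + b \<bullet> (P *v a)) / 2"
  unfolding Eform_def hs_inner_def trace_def matrix_matrix_mult_def Exy_def outer_def
    inner_vec_def matrix_vector_mult_def
  by (simp add: sum_distrib_left sum.distrib sum_divide_distrib algebra_simps)

lemma Eform_conj:
  "Eform (Q ** P ** transpose Q) a b = Eform P (transpose Q *v a) (transpose Q *v b)"
  by (simp add: Eform_eq inner_matrix_vector_mult matrix_vector_mul_assoc[symmetric]
      matrix_transpose_mul)

lemma Eform_scaleR_left [simp]: "Eform P (r *\<^sub>R a) b = r * Eform P a b"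
  by (simp add: Eform_eq matrix_vector_mult_scaleR algebra_simps)

lemma Eform_scaleR_right [simp]: "Eform P a (r *\<^sub>R b) = r * Eform P a b"
  by (simp add: Eform_eq matrix_vector_mult_scaleR algebra_simps)

lemma mu1_Eform: "mu1 \<sigma> p q (Exy x y) (outer x x) = (\<integral>P. Eform P x y ^ p * Eform P x x ^ q \<partial>\<sigma>)"
  by (simp add: mu1_def Eform_def Exy_def flip: scaleR_2)

lemma continuous_on_Eform [continuous_intros]:
  "continuous_on S g \<Longrightarrow> continuous_on S (\<lambda>x. Eform (g x) a b)"
  unfolding Eform_eq inner_vec_def matrix_vector_mult_def by (auto intro!: continuous_intros)

lemma continuous_on_conj_matrix [continuous_intros]:
  "continuous_on S (\<lambda>P :: real^'n^'n. Q ** P ** transpose Q)"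
  unfolding matrix_matrix_mult_def transpose_def by (intro continuous_on_vec_lambda continuous_intros)

lemma outer_mult_vector: "outer u v *v x = (v \<bullet> x) *\<^sub>R u"
  by (simp add: outer_def matrix_vector_mult_def inner_vec_def vec_eq_iff sum_distrib_left mult_ac)

lemma Eform_outer_self: "Eform (outer u u) a b = (u \<bullet> a) * (u \<bullet> b)"
  by (simp add: Eform_eq outer_mult_vector inner_commute)

lemma conj_outer: "Q ** outer u u ** transpose Q = outer (Q *v u) (Q *v u)"
  by (simp add: matrix_eq outer_mult_vector matrix_vector_mul_assoc[symmetric]
      matrix_vector_mult_scaleR inner_commute[of u] dot_lmul_matrix) (simp add: inner_commute)

lemma G1_eq_outer:
  assumes "P \<in> G1"
  obtains u where "norm u = 1" "P = outer u u"
proof -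
  have sym: "transpose P = P" and idem: "P ** P = P" and rk: "rank P = 1"
    using assms by (auto simp: G1_def)
  obtain B where B: "B \<subseteq> range ((*v) P)" "independent B" "range ((*v) P) \<subseteq> span B" "card B = 1"
    using basis_exists[of "range ((*v) P)"] rk by (auto simp: rank_dim_range)
  then obtain v where "B = {v}" by (meson card_1_singletonE)
  with B have "v \<noteq> 0" and "v \<in> range ((*v) P)" and span_v: "\<And>x. P *v x \<in> span {v}"
    by auto
  then have Pv: "P *v v = v"
    using idem by (auto simp: matrix_vector_mul_assoc)
  define u where "u = v /\<^sub>R norm v"
  have Pu: "P *v x = (u \<bullet> x) *\<^sub>R u" for x
  proof -
    obtain c where c: "P *v x = c *\<^sub>R v"
      using span_v[of x] by (auto simp: span_singleton)
    have "c * (v \<bullet> v) = v \<bullet> x"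
      using inner_matrix_vector_mult[of v P x] c sym Pv by simp
    with c \<open>v \<noteq> 0\<close> show ?thesis
      by (simp add: u_def field_simps power2_eq_square flip: power2_norm_eq_inner)
  qed
  show thesis
  proof
    show "norm u = 1" using \<open>v \<noteq> 0\<close> by (simp add: u_def)
    show "P = outer u u" by (simp add: matrix_eq Pu outer_mult_vector)
  qed
qed

lemma norm_outer_self: "norm (outer u u) = norm u ^ 2"
proof -
  have "outer u u \<bullet> outer u u = (u \<bullet> u) ^ 2"
    by (simp add: inner_vec_def outer_def power2_eq_square sum_product mult_ac)
  then show ?thesis
    by (simp add: norm_eq_sqrt_inner power2_norm_eq_inner)
qed

lemma bounded_G1: "bounded G1"
proof -
  have "G1 \<subseteq> cball (0 :: real^'n^'n) 1"
    by (auto elim!: G1_eq_outer simp: norm_outer_self)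
  then show ?thesis
    using bounded_subset by blast
qed

lemma inner_mult_inner_card_1:
  fixes u a b :: "real^'n"
  assumes "CARD('n) = 1" and "norm u = 1"
  shows "(u \<bullet> a) * (u \<bullet> b) = a \<bullet> b"
proof -
  obtain i :: 'n where UNIV: "UNIV = {i}"
    using assms(1) card_1_singletonE by blast
  have "u $ i * u $ i = 1"
    using assms(2) by (simp add: norm_eq_1 inner_vec_def UNIV)
  then show ?thesis
    by (simp add: inner_vec_def UNIV)
qed

lemma orthonormal_plane_through:
  fixes x y :: "real^'n"
  assumes "CARD('n) \<ge> 2"
  obtains e f where "norm e = 1" "norm f = 1" "e \<bullet> f = 0"
    "x = norm x *\<^sub>R e" "y = (e \<bullet> y) *\<^sub>R e + (f \<bullet> y) *\<^sub>R f"
proof -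
  obtain e :: "real^'n" where e: "norm e = 1" "x = norm x *\<^sub>R e"
  proof (cases "x = 0")
    case True
    then show thesis
      using that[of "axis undefined 1"] by (simp add: norm_axis_1)
  next
    case False
    then show thesis
      using that[of "x /\<^sub>R norm x"] by simp
  qed
  define v where "v = y - (e \<bullet> y) *\<^sub>R e"
  have ev: "e \<bullet> v = 0"
    using e(1) by (simp add: v_def inner_diff_right flip: power2_norm_eq_inner)
  obtain f where f: "norm f = 1" "e \<bullet> f = 0" "v = (f \<bullet> v) *\<^sub>R f"
  proof (cases "v = 0")
    case True
    obtain z :: "real^'n" where "z \<noteq> 0" "orthogonal e z"
      using orthogonal_to_vector_exists[of e] assms by auto
    with True show thesis
      using that[of "z /\<^sub>R norm z"] by (simp add: orthogonal_def)
  next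
    case False
    then show thesis
      using that[of "v /\<^sub>R norm v"] ev
      by (simp add: power2_norm_eq_inner[symmetric] power2_eq_square field_simps)
  qed
  have "f \<bullet> y = f \<bullet> v"
    using f(2) by (simp add: v_def inner_diff_right inner_commute)
  then have "y = (e \<bullet> y) *\<^sub>R e + (f \<bullet> y) *\<^sub>R f"
    using f(3) by (simp add: v_def)
  with e f show thesis
    using that by blast
qed

section \<open>Rotations of a coordinate plane\<close>

definition zeta :: "real^'n \<Rightarrow> real^'n \<Rightarrow> real^'n \<Rightarrow> complex" where
  "zeta e f v = Complex (e \<bullet> v) (f \<bullet> v)"

lemma plane_rotation:
  fixes e f :: "real^'n" and \<theta> :: real
  assumes e: "norm e = 1" and f: "norm f = 1" and ef: "e \<bullet> f = 0"
  obtains Q where "orthogonal_matrix Q" "\<And>v. zeta e f (Q *v v) = cis \<theta> * zeta e f v"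
proof -
  have ee: "e \<bullet> e = 1" and ff: "f \<bullet> f = 1" and fe: "f \<bullet> e = 0"
    using e f ef by (simp_all add: inner_commute flip: power2_norm_eq_inner)
  define \<alpha> where "\<alpha> v = (cos \<theta> - 1) * (e \<bullet> v) - sin \<theta> * (f \<bullet> v)" for v
  define \<beta> where "\<beta> v = sin \<theta> * (e \<bullet> v) + (cos \<theta> - 1) * (f \<bullet> v)" for v
  define R where "R v = v + \<alpha> v *\<^sub>R e + \<beta> v *\<^sub>R f" for v
  have "linear R"
    by (intro linearI) (simp_all add: R_def \<alpha>_def \<beta>_def inner_add_right algebra_simps)
  have zeta_R: "zeta e f (R v) = cis \<theta> * zeta e f v" for v
    by (simp add: R_def \<alpha>_def \<beta>_def zeta_def complex_eq_iff inner_add_right ee ff ef fe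
        algebra_simps)
  have "norm (R v) = norm v" for v
  proof -
    have "R v \<bullet> R v = v \<bullet> v + (\<alpha> v + e \<bullet> v)\<^sup>2 + (\<beta> v + f \<bullet> v)\<^sup>2 - (e \<bullet> v)\<^sup>2 - (f \<bullet> v)\<^sup>2"
      by (simp add: R_def inner_add_left inner_add_right ee ff ef fe inner_commute
          power2_eq_square algebra_simps)
    moreover have "(\<alpha> v + e \<bullet> v)\<^sup>2 + (\<beta> v + f \<bullet> v)\<^sup>2 =
        ((sin \<theta>)\<^sup>2 + (cos \<theta>)\<^sup>2) * ((e \<bullet> v)\<^sup>2 + (f \<bullet> v)\<^sup>2)"
      unfolding \<alpha>_def \<beta>_def by algebra
    ultimately show ?thesis
      by (simp add: norm_eq_sqrt_inner)
  qed
  with \<open>linear R\<close> have "orthogonal_transformation R"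
    by (simp add: orthogonal_transformation)
  then have "orthogonal_matrix (matrix R)"
    by (simp add: orthogonal_transformation_matrix)
  with zeta_R \<open>linear R\<close> show thesis
    by (intro that[of "matrix R"]) (simp_all add: matrix_works)
qed

text \<open>On \<open>P = outer u u\<close> these are \<open>\<bar>\<zeta>\<bar>\<^sup>2\<close> and \<open>\<zeta>\<^sup>2\<close> for \<open>\<zeta> = zeta e f u\<close>. The vector \<open>u\<close>, and hence \<open>\<zeta>\<close>,
  is determined by \<open>P\<close> only up to sign, but the monomials \<open>\<zeta>\<^sup>p * cnj \<zeta>\<^sup>q\<close> with \<open>p + q\<close> even are
  functions of \<open>P\<close>; \<open>zeta_monomial\<close> expresses them in terms of \<open>P\<close>.\<close>

definition zeta_sqnorm :: "real^'n \<Rightarrow> real^'n \<Rightarrow> real^'n^'n \<Rightarrow> real" where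
  "zeta_sqnorm e f P = Eform P e e + Eform P f f"

definition zeta_square :: "real^'n \<Rightarrow> real^'n \<Rightarrow> real^'n^'n \<Rightarrow> complex" where
  "zeta_square e f P = Complex (Eform P e e - Eform P f f) (2 * Eform P e f)"

definition zeta_monomial :: "real^'n \<Rightarrow> real^'n \<Rightarrow> nat \<Rightarrow> nat \<Rightarrow> real^'n^'n \<Rightarrow> complex" where
  "zeta_monomial e f p q P =
     (if q \<le> p then of_real (zeta_sqnorm e f P) ^ q * zeta_square e f P ^ ((p - q) div 2)
      else of_real (zeta_sqnorm e f P) ^ p * cnj (zeta_square e f P) ^ ((q - p) div 2))"

lemma zeta_monomial_outer:
  assumes "even (p + q)"
  shows "zeta_monomial e f p q (outer u u) = zeta e f u ^ p * cnj (zeta e f u) ^ q"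
proof -
  let ?z = "zeta e f u"
  have w: "of_real (zeta_sqnorm e f (outer u u)) = ?z * cnj ?z"
    and z: "zeta_square e f (outer u u) = ?z\<^sup>2"
    by (simp_all add: zeta_sqnorm_def zeta_square_def zeta_def Eform_outer_self complex_eq_iff
        power2_eq_square inner_commute)
  show ?thesis
  proof (cases "q \<le> p")
    case True
    with assms obtain r where "p = q + 2 * r"
      by (metis add_diff_inverse_nat dvd_diff_nat evenE le_Suc_ex not_le odd_add)
    with True show ?thesis
      by (simp add: zeta_monomial_def w z power_add power_mult_distrib flip: power_mult)
  next
    case False
    with assms obtain r where "q = p + 2 * r"
      by (metis add_diff_inverse_nat dvd_diff_nat evenE le_Suc_ex le_less odd_add)
    with False show ?thesis
      by (simp add: zeta_monomial_def w z power_add power_mult_distrib flip: power_mult)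
  qed
qed

lemma continuous_on_zeta_monomial [continuous_intros]:
  "continuous_on S g \<Longrightarrow> continuous_on S (\<lambda>x. zeta_monomial e f p q (g x))"
  unfolding zeta_monomial_def zeta_sqnorm_def zeta_square_def by (cases "q \<le> p") (auto intro!: continuous_intros)

section \<open>Binomial expansions\<close>

lemma of_real_Re_power_expansion:
  fixes z w :: complex
  shows "complex_of_real (Re z ^ n * Re (z * cnj w) ^ k) =
    (\<Sum>a\<le>n. \<Sum>b\<le>k. of_nat (n choose a) * of_nat (k choose b) * cnj w ^ b * w ^ (k - b) *
       (z ^ (a + b) * cnj z ^ (n + k - (a + b)))) / 2 ^ (n + k)"
proof -
  have "complex_of_real (Re z) = (z + cnj z) / 2"
    by (simp add: complex_add_cnj)
  moreover have "complex_of_real (Re (z * cnj w)) = (z * cnj w + cnj z * w) / 2"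
    using complex_add_cnj[of "z * cnj w"] by simp
  ultimately have "complex_of_real (Re z ^ n * Re (z * cnj w) ^ k) =
      ((z + cnj z) / 2) ^ n * ((z * cnj w + cnj z * w) / 2) ^ k"
    by (simp only: of_real_mult of_real_power)
  also have "\<dots> = (z + cnj z) ^ n * (z * cnj w + cnj z * w) ^ k / 2 ^ (n + k)"
    by (simp add: power_divide power_add)
  also have "\<dots> = (\<Sum>a\<le>n. \<Sum>b\<le>k. (of_nat (n choose a) * z ^ a * cnj z ^ (n - a)) *
      (of_nat (k choose b) * (z * cnj w) ^ b * (cnj z * w) ^ (k - b))) / 2 ^ (n + k)"
    by (simp add: binomial_ring sum_product)
  also have "\<dots> = (\<Sum>a\<le>n. \<Sum>b\<le>k. of_nat (n choose a) * of_nat (k choose b) * cnj w ^ b * w ^ (k - b) *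
       (z ^ (a + b) * cnj z ^ (n + k - (a + b)))) / 2 ^ (n + k)"
  proof (intro arg_cong2[where f = "(/)"] sum.cong refl)
    fix a b assume "a \<in> {..n}" "b \<in> {..k}"
    then have "n + k - (a + b) = (n - a) + (k - b)" by auto
    then show "(of_nat (n choose a) * z ^ a * cnj z ^ (n - a)) *
        (of_nat (k choose b) * (z * cnj w) ^ b * (cnj z * w) ^ (k - b)) =
      of_nat (n choose a) * of_nat (k choose b) * cnj w ^ b * w ^ (k - b) *
        (z ^ (a + b) * cnj z ^ (n + k - (a + b)))"
      by (simp add: power_add power_mult_distrib mult_ac)
  qed
  finally show ?thesis .
qed

lemma Eform_outer_expansion:
  "complex_of_real (Eform (outer u u) e (y1 *\<^sub>R e + y2 *\<^sub>R f) ^ k * Eform (outer u u) e e ^ j) =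
    (\<Sum>a\<le>k + 2 * j. \<Sum>b\<le>k. of_nat ((k + 2 * j) choose a) * of_nat (k choose b) *
       cnj (Complex y1 y2) ^ b * Complex y1 y2 ^ (k - b) *
       zeta_monomial e f (a + b) (2 * (k + j) - (a + b)) (outer u u)) / 2 ^ (2 * (k + j))"
proof -
  let ?z = "zeta e f u" and ?\<omega> = "Complex y1 y2"
  have F: "Eform (outer u u) e (y1 *\<^sub>R e + y2 *\<^sub>R f) ^ k * Eform (outer u u) e e ^ j =
      Re ?z ^ (k + 2 * j) * Re (?z * cnj ?\<omega>) ^ k"
    by (simp add: Eform_outer_self zeta_def inner_add_right inner_commute
        power_mult_distrib power_add power_mult power2_eq_square mult_ac)
  have N: "k + 2 * j + k = 2 * (k + j)"
    by simp
  have Z: "zeta_monomial e f (a + b) (2 * k + 2 * j - (a + b)) (outer u u) =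
      ?z ^ (a + b) * cnj ?z ^ (2 * k + 2 * j - (a + b))" if "a \<le> k + 2 * j" "b \<le> k" for a b
    using that by (simp add: zeta_monomial_outer)
  have "complex_of_real (Eform (outer u u) e (y1 *\<^sub>R e + y2 *\<^sub>R f) ^ k * Eform (outer u u) e e ^ j) =
    (\<Sum>a\<le>k + 2 * j. \<Sum>b\<le>k. of_nat ((k + 2 * j) choose a) * of_nat (k choose b) *
       cnj ?\<omega> ^ b * ?\<omega> ^ (k - b) * (?z ^ (a + b) * cnj ?z ^ (2 * (k + j) - (a + b)))) / 2 ^ (2 * (k + j))"
    by (simp only: F N of_real_Re_power_expansion)
  then show ?thesis
    by (simp add: Z)
qed

lemma sum_sum_if_add_eq:
  fixes c :: "nat \<Rightarrow> nat \<Rightarrow> 'a::comm_monoid_add"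
  assumes "k \<le> h" and "h \<le> n"
  shows "(\<Sum>a\<le>n. \<Sum>b\<le>k. if a + b = h then c a b else 0) = (\<Sum>b\<le>k. c (h - b) b)"
proof -
  have "(\<Sum>a\<le>n. if a + b = h then c a b else 0) = c (h - b) b" if "b \<le> k" for b
  proof -
    have "(\<Sum>a\<le>n. if a + b = h then c a b else 0) = (\<Sum>a\<le>n. if a = h - b then c a b else 0)"
      using that assms by (intro sum.cong) auto
    moreover have "h - b \<le> n"
      using assms(2) by arith
    ultimately show ?thesis
      by simp
  qed
  then show ?thesis
    by (subst sum.swap) simp
qed

definition moment_kernel :: "nat \<Rightarrow> nat \<Rightarrow> complex \<Rightarrow> real" where
  "moment_kernel k j \<omega> =
     (\<Sum>b\<le>k. real ((k + 2 * j) choose (k + j - b)) * real (k choose b) * Re (cnj \<omega> ^ b * \<omega> ^ (k - b)))"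

section \<open>A triangular spanning argument\<close>

definition fun_span :: "(nat \<Rightarrow> 'x \<Rightarrow> real) \<Rightarrow> nat set \<Rightarrow> ('x \<Rightarrow> real) set" where
  "fun_span g I = {F. \<exists>a. F = (\<lambda>x. \<Sum>i\<in>I. a i * g i x)}"

lemma fun_span_base: "finite I \<Longrightarrow> i \<in> I \<Longrightarrow> g i \<in> fun_span g I"
  unfolding fun_span_def
  by (intro CollectI exI[of _ "\<lambda>j. of_bool (j = i)"]) (simp add: fun_eq_iff)

lemma fun_span_lincomb:
  assumes "F \<in> fun_span g I" and "G \<in> fun_span g I"
  shows "(\<lambda>x. r * F x + s * G x) \<in> fun_span g I"
proof -
  obtain a b where "F = (\<lambda>x. \<Sum>i\<in>I. a i * g i x)" and "G = (\<lambda>x. \<Sum>i\<in>I. b i * g i x)"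
    using assms by (auto simp: fun_span_def)
  then show ?thesis
    unfolding fun_span_def
    by (intro CollectI exI[of _ "\<lambda>i. r * a i + s * b i"])
      (simp add: sum_distrib_left sum.distrib algebra_simps)
qed

lemma fun_span_sum:
  assumes "finite A" and "\<And>j. j \<in> A \<Longrightarrow> F j \<in> fun_span g I"
  shows "(\<lambda>x. \<Sum>j\<in>A. c j * F j x) \<in> fun_span g I"
  using assms
proof (induction A rule: finite_induct)
  case empty
  show ?case
    by (simp add: fun_span_def exI[of _ "\<lambda>_. 0"])
next
  case (insert j A)
  then show ?case
    using fun_span_lincomb[of "F j" g I "\<lambda>x. \<Sum>j\<in>A. c j * F j x" "c j" 1] by simp
qed

lemma sum_atMost_split_ends:
  fixes f :: "nat \<Rightarrow> 'a::comm_monoid_add"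
  shows "(\<Sum>b\<le>L. f b) = (\<Sum>b\<in>{0, L}. f b) + (\<Sum>b\<in>{1..<L}. f b)"
proof -
  have "{..L} = {0, L} \<union> {1..<L}"
    by auto
  then show ?thesis
    by (simp only:) (rule sum.union_disjoint, auto)
qed

lemma symmetric_family_in_fun_span_lower_half:
  fixes c :: "nat \<Rightarrow> 'x \<Rightarrow> real" and \<gamma> :: "nat \<Rightarrow> nat \<Rightarrow> real"
  assumes sym: "\<And>j. j \<le> m \<Longrightarrow> c (m - j) = c j"
    and pos: "\<And>i b. 2 * i + b \<le> m \<Longrightarrow> \<gamma> i b > 0"
  defines "g \<equiv> \<lambda>i x. \<Sum>b\<le>m - 2 * i. \<gamma> i b * c (i + b) x"
  assumes "2 * i \<le> m"
  shows "c i \<in> fun_span g {..m div 2}"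
  using \<open>2 * i \<le> m\<close>
proof (induction "m - 2 * i" arbitrary: i rule: less_induct)
  case less
  let ?S = "fun_span g {..m div 2}"
  define L where "L = m - 2 * i"
  have inner: "c (i + b) \<in> ?S" if "b \<in> {1..<L}" for b
  proof (cases "i + b \<le> m - (i + b)")
    case True
    with that show ?thesis
      by (intro less.hyps) (auto simp: L_def)
  next
    case False
    with that have "c (m - (i + b)) \<in> ?S"
      by (intro less.hyps) (auto simp: L_def)
    moreover have "i + b \<le> m"
      using that by (simp add: L_def) arith
    ultimately show ?thesis
      using sym[of "i + b"] by simp
  qed
  \<comment> \<open>The two extreme terms of \<open>g i\<close> are multiples of \<open>c i\<close>; all other terms are already in the span.\<close>
  define \<kappa> where "\<kappa> = (\<Sum>b\<in>{0, L}. \<gamma> i b)"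
  define mid where "mid x = (\<Sum>b\<in>{1..<L}. \<gamma> i b * c (i + b) x)" for x
  have "\<kappa> > 0"
    using pos less.prems by (auto simp: \<kappa>_def L_def intro!: sum_pos)
  have "(\<Sum>b\<in>{0, L}. \<gamma> i b * c (i + b) x) = \<kappa> * c i x" for x
    unfolding \<kappa>_def sum_distrib_right using sym[of i] less.prems
    by (intro sum.cong) (auto simp: L_def)
  then have "g i x = \<kappa> * c i x + mid x" for x
    by (simp only: g_def L_def[symmetric] sum_atMost_split_ends mid_def)
  then have "c i = (\<lambda>x. (1 / \<kappa>) * g i x + (- 1 / \<kappa>) * mid x)"
    using \<open>\<kappa> > 0\<close> by (simp add: fun_eq_iff field_simps)
  also have "\<dots> \<in> ?S"
    unfolding mid_def using less.prems
    by (intro fun_span_lincomb fun_span_base fun_span_sum inner) auto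
  finally show ?case .
qed

lemma symmetric_family_in_fun_span:
  fixes c :: "nat \<Rightarrow> 'x \<Rightarrow> real" and \<gamma> :: "nat \<Rightarrow> nat \<Rightarrow> real"
  assumes sym: "\<And>j. j \<le> m \<Longrightarrow> c (m - j) = c j"
    and pos: "\<And>i b. 2 * i + b \<le> m \<Longrightarrow> \<gamma> i b > 0"
    and "j \<le> m"
  shows "c j \<in> fun_span (\<lambda>i x. \<Sum>b\<le>m - 2 * i. \<gamma> i b * c (i + b) x) {..m div 2}"
proof (cases "2 * j \<le> m")
  case True
  then show ?thesis
    using symmetric_family_in_fun_span_lower_half[of m c \<gamma>, OF sym pos] by blast
next
  case False
  then have "2 * (m - j) \<le> m"
    by simp
  with symmetric_family_in_fun_span_lower_half[of m c \<gamma>, OF sym pos] sym[OF \<open>j \<le> m\<close>] show ?thesis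
    by fastforce
qed

lemma Re_power_binomial:
  "Re \<omega> ^ m = (\<Sum>j\<le>m. (real (m choose j) / 2 ^ m) * Re (cnj \<omega> ^ j * \<omega> ^ (m - j)))"
proof -
  have re: "complex_of_real (Re \<omega>) = (cnj \<omega> + \<omega>) / 2"
    by (simp add: complex_add_cnj add.commute)
  have "complex_of_real (Re \<omega> ^ m) =
      (\<Sum>j\<le>m. of_nat (m choose j) * cnj \<omega> ^ j * \<omega> ^ (m - j)) / 2 ^ m"
    by (simp only: of_real_power re power_divide binomial_ring)
  also have "\<dots> = (\<Sum>j\<le>m. complex_of_real (real (m choose j) / 2 ^ m) * (cnj \<omega> ^ j * \<omega> ^ (m - j)))"
    by (simp add: sum_divide_distrib mult.assoc)
  finally have "Re (complex_of_real (Re \<omega> ^ m)) =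
      Re (\<Sum>j\<le>m. complex_of_real (real (m choose j) / 2 ^ m) * (cnj \<omega> ^ j * \<omega> ^ (m - j)))"
    by (rule arg_cong)
  moreover have "Re (complex_of_real r * z) = r * Re z" for r z
    by simp
  ultimately show ?thesis
    by (simp only: Re_complex_of_real Re_sum)
qed

lemma Re_cnj_power_mult_commute: "Re (cnj \<omega> ^ p * \<omega> ^ q) = Re (cnj \<omega> ^ q * \<omega> ^ p)"
proof -
  have "cnj \<omega> ^ p * \<omega> ^ q = cnj (cnj \<omega> ^ q * \<omega> ^ p)"
    by (simp add: mult.commute)
  then show ?thesis
    by (simp only: cnj.sel(1))
qed

lemma Re_cnj_power_unit_circle:
  assumes "cmod \<omega> = 1" and "i \<le> m div 2" and "b \<le> m - 2 * i"
  shows "Re (cnj \<omega> ^ (i + b) * \<omega> ^ (m - (i + b))) = Re (cnj \<omega> ^ b * \<omega> ^ (m - 2 * i - b))"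
proof -
  have unit: "cnj \<omega> * \<omega> = 1"
    using assms(1) complex_norm_square[of \<omega>] by (simp add: mult.commute)
  have "2 * i \<le> m"
    using assms(2) by (simp add: less_eq_div_iff_mult_less_eq)
  with assms(3) have "m - (i + b) = i + (m - 2 * i - b)"
    by simp
  then have "cnj \<omega> ^ (i + b) * \<omega> ^ (m - (i + b)) =
      (cnj \<omega> * \<omega>) ^ i * (cnj \<omega> ^ b * \<omega> ^ (m - 2 * i - b))"
    by (simp add: power_add power_mult_distrib mult_ac)
  then show ?thesis
    by (simp add: unit)
qed

lemma Re_power_combination:
  fixes \<gamma> :: "nat \<Rightarrow> nat \<Rightarrow> real"
  assumes pos: "\<And>i b. 2 * i + b \<le> m \<Longrightarrow> \<gamma> i b > 0"
  obtains a where "\<And>\<omega>. cmod \<omega> = 1 \<Longrightarrow> Re \<omega> ^ m =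
    (\<Sum>i\<le>m div 2. a i * (\<Sum>b\<le>m - 2 * i. \<gamma> i b * Re (cnj \<omega> ^ b * \<omega> ^ (m - 2 * i - b))))"
proof -
  define c where "c j \<omega> = Re (cnj \<omega> ^ j * \<omega> ^ (m - j))" for j \<omega>
  have "(\<lambda>\<omega>. Re \<omega> ^ m) = (\<lambda>\<omega>. \<Sum>j\<le>m. (real (m choose j) / 2 ^ m) * c j \<omega>)"
    by (simp add: Re_power_binomial c_def)
  also have "\<dots> \<in> fun_span (\<lambda>i \<omega>. \<Sum>b\<le>m - 2 * i. \<gamma> i b * c (i + b) \<omega>) {..m div 2}"
  proof (intro fun_span_sum symmetric_family_in_fun_span pos)
    show "c (m - j) = c j" if "j \<le> m" for j
    proof
      fix \<omega>
      show "c (m - j) \<omega> = c j \<omega>"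
        using that Re_cnj_power_mult_commute[of \<omega> "m - j" j] by (simp only: c_def diff_diff_cancel)
    qed
  qed auto
  finally obtain a where a:
      "\<And>\<omega>. Re \<omega> ^ m = (\<Sum>i\<le>m div 2. a i * (\<Sum>b\<le>m - 2 * i. \<gamma> i b * c (i + b) \<omega>))"
    by (auto simp: fun_span_def fun_eq_iff)
  show thesis
  proof (rule that)
    fix \<omega> :: complex
    assume \<omega>: "cmod \<omega> = 1"
    have inner: "(\<Sum>b\<le>m - 2 * i. \<gamma> i b * c (i + b) \<omega>) =
        (\<Sum>b\<le>m - 2 * i. \<gamma> i b * Re (cnj \<omega> ^ b * \<omega> ^ (m - 2 * i - b)))" if "i \<le> m div 2" for i
      using \<omega> that by (intro sum.cong refl) (simp only: c_def Re_cnj_power_unit_circle atMost_iff)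
    show "Re \<omega> ^ m =
        (\<Sum>i\<le>m div 2. a i * (\<Sum>b\<le>m - 2 * i. \<gamma> i b * Re (cnj \<omega> ^ b * \<omega> ^ (m - 2 * i - b))))"
      by (simp add: a inner)
  qed
qed

section \<open>Moments of an orthogonally invariant measure on rank-one projections\<close>

locale G1_measure =
  fixes \<sigma> :: "(real^'n^'n) measure"
  assumes orth_inv: "orth_inv_prob_on_G1 \<sigma>"
begin

sublocale prob_space \<sigma>
  using orth_inv by (simp add: orth_inv_prob_on_G1_def)

lemma sets_eq_borel: "sets \<sigma> = sets borel"
  using orth_inv by (simp add: orth_inv_prob_on_G1_def)

lemma AE_G1: "AE P in \<sigma>. P \<in> G1"
  using orth_inv by (intro AE_prob_1) (simp add: orth_inv_prob_on_G1_def measure_def)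

lemma measurable_continuous:
  "continuous_on UNIV g \<Longrightarrow> g \<in> borel_measurable \<sigma>"
  by (simp add: borel_measurable_continuous_onI measurable_cong_sets[OF sets_eq_borel refl])

lemma integrable_continuous:
  fixes g :: "real^'n^'n \<Rightarrow> 'b::{banach, second_countable_topology}"
  assumes g: "continuous_on UNIV g"
  shows "integrable \<sigma> g"
proof -
  have "compact (g ` closure G1)"
    using bounded_G1 by (intro compact_continuous_image continuous_on_subset[OF g]) auto
  then obtain B where "\<forall>P \<in> closure G1. norm (g P) \<le> B"
    by (meson compact_imp_bounded bounded_iff imageI)
  then have "AE P in \<sigma>. norm (g P) \<le> B"
    using AE_G1 closure_subset by (auto elim!: eventually_mono)
  with g show ?thesis
    by (intro integrable_const_bound measurable_continuous)
qed

lemma integral_conj_orthogonal: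
  fixes g :: "real^'n^'n \<Rightarrow> 'b::{banach, second_countable_topology}"
  assumes Q: "orthogonal_matrix Q" and g: "g \<in> borel_measurable borel"
  shows "(\<integral>P. g (Q ** P ** transpose Q) \<partial>\<sigma>) = (\<integral>P. g P \<partial>\<sigma>)"
proof -
  have "(\<lambda>P. Q ** P ** transpose Q) \<in> \<sigma> \<rightarrow>\<^sub>M \<sigma>"
    unfolding measurable_cong_sets[OF sets_eq_borel sets_eq_borel]
    by (intro borel_measurable_continuous_onI continuous_on_conj_matrix)
  moreover have "distr \<sigma> \<sigma> (\<lambda>P. Q ** P ** transpose Q) = \<sigma>"
    using orth_inv Q by (simp add: orth_inv_prob_on_G1_def)
  ultimately show ?thesis
    using integral_distr[of _ \<sigma> \<sigma> g] g
    by (metis measurable_cong_sets[OF sets_eq_borel refl])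
qed

lemma integral_zeta_monomial:
  assumes e: "norm e = 1" and f: "norm f = 1" and ef: "e \<bullet> f = 0" and even: "even (p + q)"
  shows "(\<integral>P. zeta_monomial e f p q P \<partial>\<sigma>) =
    (if p = q then of_real (\<integral>P. zeta_sqnorm e f P ^ p \<partial>\<sigma>) else 0)"
proof (cases "p = q")
  case True
  then show ?thesis
    by (simp add: zeta_monomial_def flip: of_real_power)
next
  case False
  \<comment> \<open>A rotation of the \<open>(e, f)\<close>-plane by \<open>\<theta>\<close> multiplies the monomial by \<open>cis ((p - q) \<theta>) = -1\<close>.\<close>
  define \<theta> where "\<theta> = pi / (real p - real q)"
  obtain Q where Q: "orthogonal_matrix Q" and rot: "\<And>v. zeta e f (Q *v v) = cis \<theta> * zeta e f v"
    using plane_rotation[OF e f ef, where \<theta> = \<theta>] by blast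
  have "(real p - real q) * \<theta> = pi"
    using False by (simp add: \<theta>_def)
  then have angle: "real p * \<theta> + real q * (- \<theta>) = pi"
    by (simp add: left_diff_distrib)
  have turn: "cis \<theta> ^ p * cnj (cis \<theta>) ^ q = -1"
    by (simp only: Complex.DeMoivre cis_cnj cis_mult angle cis_pi)
  have "(\<integral>P. zeta_monomial e f p q P \<partial>\<sigma>) =
      (\<integral>P. zeta_monomial e f p q (Q ** P ** transpose Q) \<partial>\<sigma>)"
    using Q by (intro integral_conj_orthogonal[symmetric] borel_measurable_continuous_onI
        continuous_intros continuous_on_id)
  also have "\<dots> = (\<integral>P. - zeta_monomial e f p q P \<partial>\<sigma>)"
  proof (intro integral_cong_AE measurable_continuous continuous_intros)
    show "AE P in \<sigma>. zeta_monomial e f p q (Q ** P ** transpose Q) = - zeta_monomial e f p q P"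
      using AE_G1
    proof eventually_elim
      case (elim P)
      then obtain u where "P = outer u u" by (auto elim: G1_eq_outer)
      then have "zeta_monomial e f p q (Q ** P ** transpose Q) =
          (cis \<theta> ^ p * cnj (cis \<theta>) ^ q) * zeta_monomial e f p q P"
        by (simp add: conj_outer zeta_monomial_outer[OF even] rot power_mult_distrib mult_ac)
      then show ?case
        using turn by simp
    qed
  qed
  finally show ?thesis
    using False by simp
qed

lemma integral_Eform_moment_sqnorm:
  assumes e: "norm e = 1" and f: "norm f = 1" and ef: "e \<bullet> f = 0"
  shows "(\<integral>P. Eform P e (y1 *\<^sub>R e + y2 *\<^sub>R f) ^ k * Eform P e e ^ j \<partial>\<sigma>) =
    moment_kernel k j (Complex y1 y2) * (\<integral>P. zeta_sqnorm e f P ^ (k + j) \<partial>\<sigma>) / 4 ^ (k + j)"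
proof -
  define h where "h = k + j"
  define c where "c a b = of_nat ((k + 2 * j) choose a) * of_nat (k choose b) *
    cnj (Complex y1 y2) ^ b * Complex y1 y2 ^ (k - b)" for a b
  define W where "W = (\<integral>P. zeta_sqnorm e f P ^ h \<partial>\<sigma>)"
  let ?F = "\<lambda>P. Eform P e (y1 *\<^sub>R e + y2 *\<^sub>R f) ^ k * Eform P e e ^ j"
  let ?Z = "\<lambda>a b. zeta_monomial e f (a + b) (2 * h - (a + b))"
  have expand: "AE P in \<sigma>. complex_of_real (?F P) =
      (\<Sum>a\<le>k + 2 * j. \<Sum>b\<le>k. c a b * ?Z a b P) / 2 ^ (2 * h)"
    using AE_G1
  proof eventually_elim
    case (elim P)
    then obtain u where P: "P = outer u u"
      by (auto elim: G1_eq_outer)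
    show ?case
      using Eform_outer_expansion[of u e y1 y2 f k j] by (simp only: P c_def h_def)
  qed
  have integral_Z: "(\<integral>P. ?Z a b P \<partial>\<sigma>) = (if a + b = h then of_real W else 0)"
    if "a \<le> k + 2 * j" "b \<le> k" for a b
    using that by (subst integral_zeta_monomial[OF e f ef]) (auto simp: W_def h_def)
  have "complex_of_real (\<integral>P. ?F P \<partial>\<sigma>) = (\<integral>P. complex_of_real (?F P) \<partial>\<sigma>)"
    by (rule integral_complex_of_real[symmetric])
  also have "\<dots> = (\<integral>P. (\<Sum>a\<le>k + 2 * j. \<Sum>b\<le>k. c a b * ?Z a b P) / 2 ^ (2 * h) \<partial>\<sigma>)"
    by (intro integral_cong_AE expand measurable_continuous continuous_intros continuous_on_id) auto
  also have "\<dots> = (\<Sum>a\<le>k + 2 * j. \<Sum>b\<le>k. c a b * (\<integral>P. ?Z a b P \<partial>\<sigma>)) / 2 ^ (2 * h)"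
    by (simp add: integral_sum integrable_sum integrable_continuous continuous_intros)
  also have "\<dots> = (\<Sum>a\<le>k + 2 * j. \<Sum>b\<le>k. if a + b = h then c a b * of_real W else 0) / 2 ^ (2 * h)"
    by (intro arg_cong2[where f = "(/)"] sum.cong refl) (simp add: integral_Z)
  also have "\<dots> = (\<Sum>b\<le>k. c (h - b) b) * of_real W / 4 ^ h"
  proof -
    have "k \<le> h" and "h \<le> k + 2 * j"
      by (simp_all add: h_def)
    moreover have "(2::complex) ^ (2 * h) = 4 ^ h"
      by (simp add: power_mult)
    ultimately show ?thesis
      by (simp add: sum_sum_if_add_eq sum_distrib_right)
  qed
  finally have "Re (complex_of_real (\<integral>P. ?F P \<partial>\<sigma>)) = Re ((\<Sum>b\<le>k. c (h - b) b) * of_real W / 4 ^ h)"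
    by (rule arg_cong)
  then show ?thesis
    by (simp add: moment_kernel_def Re_sum c_def W_def h_def mult.assoc)
qed

lemma integral_Eform_moment:
  assumes e: "norm e = 1" and f: "norm f = 1" and ef: "e \<bullet> f = 0"
  shows "(\<integral>P. Eform P e (y1 *\<^sub>R e + y2 *\<^sub>R f) ^ k * Eform P e e ^ j \<partial>\<sigma>) =
    moment_kernel k j (Complex y1 y2) * (\<integral>P. Eform P e e ^ (k + j) \<partial>\<sigma>) /
      real ((2 * (k + j)) choose (k + j))"
proof -
  \<comment> \<open>The case \<open>k = 0\<close> expresses the moments of \<open>zeta_sqnorm\<close> through those of \<open>Eform P e e\<close>.\<close>
  have "(\<integral>P. Eform P e e ^ (k + j) \<partial>\<sigma>) =
      real ((2 * (k + j)) choose (k + j)) * (\<integral>P. zeta_sqnorm e f P ^ (k + j) \<partial>\<sigma>) / 4 ^ (k + j)"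
    using integral_Eform_moment_sqnorm[OF e f ef, of 0 0 0 "k + j"]
    by (simp add: moment_kernel_def mult_2)
  then show ?thesis
    by (simp add: integral_Eform_moment_sqnorm[OF e f ef])
qed

text \<open>Any unit vector in place of \<open>axis undefined 1\<close> gives the same value, see \<open>integral_Eform_unit\<close>.\<close>

definition axial_moment :: "nat \<Rightarrow> real" where
  "axial_moment q = (\<integral>P. Eform P (axis undefined 1) (axis undefined 1) ^ q \<partial>\<sigma>)"

lemma integral_Eform_unit:
  assumes "norm e = 1"
  shows "(\<integral>P. Eform P e e ^ q \<partial>\<sigma>) = axial_moment q"
proof -
  obtain A where A: "orthogonal_matrix A" and Ae: "A *v axis undefined 1 = e"
    using orthogonal_matrix_exists_basis[OF assms] by blast
  have "transpose A *v e = (transpose A ** A) *v axis undefined 1"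
    by (simp only: Ae[symmetric] matrix_vector_mul_assoc)
  also have "\<dots> = axis undefined 1"
    using A by (simp add: orthogonal_matrix_def)
  finally have "transpose A *v e = axis undefined 1" .
  moreover have "(\<integral>P. Eform P e e ^ q \<partial>\<sigma>) = (\<integral>P. Eform (A ** P ** transpose A) e e ^ q \<partial>\<sigma>)"
    using A by (intro integral_conj_orthogonal[symmetric] borel_measurable_continuous_onI
        continuous_intros continuous_on_id)
  ultimately show ?thesis
    by (simp add: Eform_conj axial_moment_def)
qed

lemma axial_moment_pos: "axial_moment q > 0"
proof -
  have nonneg: "AE P in \<sigma>. 0 \<le> Eform P a a ^ q" for a
    using AE_G1 by eventually_elim (auto elim!: G1_eq_outer simp: Eform_outer_self)
  have integrable: "integrable \<sigma> (\<lambda>P. Eform P a a ^ q)" for a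
    by (intro integrable_continuous continuous_intros continuous_on_id)
  have "axial_moment q \<noteq> 0"
  proof
    assume "axial_moment q = 0"
    then have "AE P in \<sigma>. Eform P (axis i 1) (axis i 1) ^ q = 0" for i
      using integral_Eform_unit[of "axis i 1" q] integral_nonneg_eq_0_iff_AE[OF integrable nonneg]
      by simp
    then have "AE P in \<sigma>. \<forall>i \<in> UNIV. Eform P (axis i 1) (axis i 1) ^ q = 0"
      by (intro AE_finite_allI) auto
    with AE_G1 have "AE P in \<sigma>. False"
    proof eventually_elim
      case (elim P)
      then obtain u where "norm u = 1" "P = outer u u" by (auto elim: G1_eq_outer)
      with elim(2) have "u = 0"
        by (simp add: Eform_outer_self inner_axis vec_eq_iff)
      with \<open>norm u = 1\<close> show False by simp
    qed
    then show False
      by simp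
  qed
  moreover have "axial_moment q \<ge> 0"
    unfolding axial_moment_def by (rule integral_nonneg_AE[OF nonneg])
  ultimately show ?thesis
    by simp
qed

lemma integral_Eform_through_plane:
  fixes x y :: "real^'n"
  assumes "CARD('n) \<ge> 2" and "norm y = 1"
  obtains \<omega> where "cmod \<omega> = 1" and "x \<bullet> y = norm x * Re \<omega>"
    and "\<And>k j. (\<integral>P. Eform P x y ^ k * Eform P x x ^ j \<partial>\<sigma>) = norm x ^ (k + 2 * j) *
      (axial_moment (k + j) / real ((2 * (k + j)) choose (k + j)) * moment_kernel k j \<omega>)"
proof -
  obtain e f where e: "norm e = 1" and f: "norm f = 1" and ef: "e \<bullet> f = 0"
    and x: "x = norm x *\<^sub>R e" and y: "y = (e \<bullet> y) *\<^sub>R e + (f \<bullet> y) *\<^sub>R f"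
    using orthonormal_plane_through[OF assms(1)] by blast
  define \<omega> where "\<omega> = Complex (e \<bullet> y) (f \<bullet> y)"
  have "(e \<bullet> y)\<^sup>2 + (f \<bullet> y)\<^sup>2 = y \<bullet> y"
    using e f ef by (subst (3 4) y) (simp add: inner_add_left inner_add_right inner_commute
        power2_eq_square flip: power2_norm_eq_inner)
  then have "cmod \<omega> = 1"
    using assms(2) by (simp add: \<omega>_def cmod_def flip: power2_norm_eq_inner)
  moreover have "x \<bullet> y = norm x * Re \<omega>"
    by (subst x) (simp add: \<omega>_def)
  moreover have "(\<integral>P. Eform P x y ^ k * Eform P x x ^ j \<partial>\<sigma>) = norm x ^ (k + 2 * j) *
      (axial_moment (k + j) / real ((2 * (k + j)) choose (k + j)) * moment_kernel k j \<omega>)" for k j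
  proof -
    have "Eform P x y ^ k * Eform P x x ^ j = norm x ^ (k + 2 * j) * (Eform P e y ^ k * Eform P e e ^ j)"
      for P
      by (subst (1 2 3) x) (simp add: power_mult_distrib power_add power_mult power2_eq_square)
    then have "(\<integral>P. Eform P x y ^ k * Eform P x x ^ j \<partial>\<sigma>) =
        norm x ^ (k + 2 * j) * (\<integral>P. Eform P e y ^ k * Eform P e e ^ j \<partial>\<sigma>)"
      by simp
    also have "(\<integral>P. Eform P e y ^ k * Eform P e e ^ j \<partial>\<sigma>) =
        axial_moment (k + j) / real ((2 * (k + j)) choose (k + j)) * moment_kernel k j \<omega>"
      by (subst y) (simp add: integral_Eform_moment[OF e f ef] integral_Eform_unit[OF e] \<omega>_def)
    finally show ?thesis .
  qed
  ultimately show thesis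
    using that by blast
qed

lemma mu1_card_1:
  assumes "CARD('n) = 1"
  shows "mu1 \<sigma> p q (Exy x y) (outer x x) = (x \<bullet> y) ^ p * (x \<bullet> x) ^ q"
proof -
  have "AE P in \<sigma>. Eform P x y ^ p * Eform P x x ^ q = (x \<bullet> y) ^ p * (x \<bullet> x) ^ q"
    using AE_G1 by eventually_elim
      (auto elim!: G1_eq_outer simp: Eform_outer_self inner_mult_inner_card_1[OF assms])
  then show ?thesis
    by (simp add: mu1_Eform integral_cong_AE[where g = "\<lambda>_. _"] measurable_continuous
        continuous_intros prob_space)
qed

lemma inner_power_expansion_card_ge_2:
  assumes "CARD('n) \<ge> 2"
  obtains a where "\<And>x y :: real^'n. norm y = 1 \<Longrightarrow> (x \<bullet> y) ^ m * norm x ^ (2 * l) =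
    (\<Sum>i = 0..m div 2. a i * mu1 \<sigma> (m - 2 * i) (l + i) (Exy x y) (outer x x))"
proof -
  define \<gamma> where "\<gamma> i b = axial_moment (m - i + l) / real ((2 * (m - i + l)) choose (m - i + l)) *
    (real ((m + 2 * l) choose (m - i + l - b)) * real ((m - 2 * i) choose b))" for i b
  have \<gamma>_pos: "\<gamma> i b > 0" if "2 * i + b \<le> m" for i b
    using that axial_moment_pos by (simp add: \<gamma>_def)
  obtain a where a: "\<And>\<omega>. cmod \<omega> = 1 \<Longrightarrow> Re \<omega> ^ m =
      (\<Sum>i\<le>m div 2. a i * (\<Sum>b\<le>m - 2 * i. \<gamma> i b * Re (cnj \<omega> ^ b * \<omega> ^ (m - 2 * i - b))))"
    using Re_power_combination[of m \<gamma>, OF \<gamma>_pos] by blast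
  have "(x \<bullet> y) ^ m * norm x ^ (2 * l) =
      (\<Sum>i = 0..m div 2. a i * mu1 \<sigma> (m - 2 * i) (l + i) (Exy x y) (outer x x))"
    if y: "norm y = 1" for x y :: "real^'n"
  proof -
    obtain \<omega> where \<omega>: "cmod \<omega> = 1" "x \<bullet> y = norm x * Re \<omega>"
      and moment: "\<And>k j. (\<integral>P. Eform P x y ^ k * Eform P x x ^ j \<partial>\<sigma>) = norm x ^ (k + 2 * j) *
        (axial_moment (k + j) / real ((2 * (k + j)) choose (k + j)) * moment_kernel k j \<omega>)"
      using integral_Eform_through_plane[OF assms y] by blast
    have mu1_eq: "mu1 \<sigma> (m - 2 * i) (l + i) (Exy x y) (outer x x) = norm x ^ (m + 2 * l) *
        (\<Sum>b\<le>m - 2 * i. \<gamma> i b * Re (cnj \<omega> ^ b * \<omega> ^ (m - 2 * i - b)))" if "i \<le> m div 2" for i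
    proof -
      have "2 * i \<le> m"
        using that by (simp add: less_eq_div_iff_mult_less_eq)
      then have N: "m - 2 * i + 2 * (l + i) = m + 2 * l" and h: "m - 2 * i + (l + i) = m - i + l"
        by simp_all
      show ?thesis
        using moment[of "m - 2 * i" "l + i"]
        by (simp only: mu1_Eform moment_kernel_def N h \<gamma>_def sum_distrib_left mult.assoc)
    qed
    have "(x \<bullet> y) ^ m * norm x ^ (2 * l) = norm x ^ (m + 2 * l) * Re \<omega> ^ m"
      by (simp add: \<omega>(2) power_mult_distrib power_add)
    also have "\<dots> = (\<Sum>i = 0..m div 2. a i * mu1 \<sigma> (m - 2 * i) (l + i) (Exy x y) (outer x x))"
      by (simp add: mu1_eq a[OF \<omega>(1)] atLeast0AtMost sum_distrib_left mult.left_commute)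
    finally show ?thesis .
  qed
  then show thesis
    by (rule that)
qed

end

theorem proposition3p4:
  fixes m l :: nat and \<sigma> :: "(real^'n^'n) measure"
  assumes "CARD('n) \<ge> m + l"
    and "orth_inv_prob_on_G1 \<sigma>"
  shows "\<exists>a :: nat \<Rightarrow> real. \<forall>(x::real^'n) (y::real^'n). norm y = 1 \<longrightarrow>
           (inner x y) ^ m * (norm x) ^ (2 * l) =
           (\<Sum>i = 0..m div 2. a i * mu1 \<sigma> (m - 2 * i) (l + i) (Exy x y) (outer x x))"
proof -
  interpret G1_measure \<sigma>
    using assms(2) by unfold_locales
  show ?thesis
  proof (cases "CARD('n) = 1")
    case True
    then show ?thesis
      by (intro exI[of _ "\<lambda>i. of_bool (i = 0)"])
        (simp add: mu1_card_1 power_mult atLeast0AtMost flip: power2_norm_eq_inner)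
  next
    case False
    moreover have "CARD('n) > 0"
      by simp
    ultimately have "CARD('n) \<ge> 2"
      by linarith
    then obtain a where "\<And>x y :: real^'n. norm y = 1 \<Longrightarrow> (x \<bullet> y) ^ m * norm x ^ (2 * l) =
        (\<Sum>i = 0..m div 2. a i * mu1 \<sigma> (m - 2 * i) (l + i) (Exy x y) (outer x x))"
      using inner_power_expansion_card_ge_2 by blast
    then show ?thesis
      by blast
  qed
qed

end
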